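(* Let $A$ be a finite additive poset and $a\in A$ nonzero. The following are equivalent: (i) $a$ is a tile; (ii) the tail $A_a$ is isomorphic (as an additive poset) to an additive powerset $2^I$ for some set $I$; (iii) all atoms of $A_a$ are pairwise independent and their sum equals $a$; (iv) the expansion of $a$ as a sum of pairwise independent atoms of $A$ is unique up to permutation of the atoms.
   Context: An additive poset is a pair $(A,\le)$ where $A$ is an abelian group and $\le$ is a partial order on $A$ such that for all $a,b,c\in A$: $(\ast)$ if $b\le a$ and $c\le a$ then $b+c\le a$; $(\ast\ast)$ if $a\le b$ and $a\le c$ then $a\le a+b+c$. The tail $A_a=\{x:x\le a\}$ is an additive subposet. Elements $x,y$ are independent if $x\le x+y$. An atom is a nonzero $x$ with $A_x=\{0,x\}$. A tile is a nonzero $a$ such that any two distinct atoms of $A$ in $A_a$ are independent. For a set $I$, the additive powerset $2^I$ is the set of subsets of $I$ with symmetric difference as addition and inclusion as order. Isomorphism of additive posets means a bijection which is a group and order isomorphism. *)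

theory Defs
  imports "HOL-Library.Multiset"
begin

definition additive_poset :: "('a::ab_group_add \<Rightarrow> 'a \<Rightarrow> bool) \<Rightarrow> bool" where
  "additive_poset le \<longleftrightarrow>
     (\<forall>x. le x x) \<and>
     (\<forall>x y. le x y \<and> le y x \<longrightarrow> x = y) \<and>
     (\<forall>x y z. le x y \<and> le y z \<longrightarrow> le x z) \<and>
     (\<forall>a b c. le b a \<and> le c a \<longrightarrow> le (b + c) a) \<and>
     (\<forall>a b c. le a b \<and> le a c \<longrightarrow> le a (a + b + c))"

definition tail :: "('a \<Rightarrow> 'a \<Rightarrow> bool) \<Rightarrow> 'a \<Rightarrow> 'a set" where
  "tail le a = {x. le x a}"

definition independent :: "('a::ab_group_add \<Rightarrow> 'a \<Rightarrow> bool) \<Rightarrow> 'a \<Rightarrow> 'a \<Rightarrow> bool" where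
  "independent le x y \<longleftrightarrow> le x (x + y)"

definition atom_in :: "('a::ab_group_add \<Rightarrow> 'a \<Rightarrow> bool) \<Rightarrow> 'a set \<Rightarrow> 'a \<Rightarrow> bool" where
  "atom_in le S x \<longleftrightarrow> x \<noteq> 0 \<and> x \<in> S \<and> {y \<in> S. le y x} = {0, x}"

abbreviation atom :: "('a::ab_group_add \<Rightarrow> 'a \<Rightarrow> bool) \<Rightarrow> 'a \<Rightarrow> bool" where
  "atom le x \<equiv> atom_in le UNIV x"

definition tile :: "('a::ab_group_add \<Rightarrow> 'a \<Rightarrow> bool) \<Rightarrow> 'a \<Rightarrow> bool" where
  "tile le a \<longleftrightarrow> a \<noteq> 0 \<and>
     (\<forall>x y. atom le x \<and> atom le y \<and> x \<in> tail le a \<and> y \<in> tail le a \<and> x \<noteq> y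
        \<longrightarrow> independent le x y)"

definition iso_powerset :: "('a::ab_group_add \<Rightarrow> 'a \<Rightarrow> bool) \<Rightarrow> 'a set \<Rightarrow> ('a \<Rightarrow> 'b set) \<Rightarrow> 'b set \<Rightarrow> bool" where
  "iso_powerset le S f I \<longleftrightarrow> bij_betw f S (Pow I) \<and>
     (\<forall>x\<in>S. \<forall>y\<in>S. f (x + y) = (f x - f y) \<union> (f y - f x)) \<and>
     (\<forall>x\<in>S. \<forall>y\<in>S. le x y \<longleftrightarrow> f x \<subseteq> f y)"

definition atom_expansion :: "('a::ab_group_add \<Rightarrow> 'a \<Rightarrow> bool) \<Rightarrow> 'a \<Rightarrow> 'a list \<Rightarrow> bool" where
  "atom_expansion le a xs \<longleftrightarrow> (\<forall>x\<in>set xs. atom le x) \<and>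
     (\<forall>i<length xs. \<forall>j<length xs. i \<noteq> j \<longrightarrow> independent le (xs ! i) (xs ! j)) \<and>
     sum_list xs = a"

end

theory Submission
  imports Defs
begin

text \<open>
  In a finite additive poset the tail of \<open>a\<close> is a finite set closed under addition, hence it
  contains \<open>-a\<close>; so \<open>-a \<le> a \<le> -a\<close> and every element has order two. Every \<open>b\<close> is a sum of
  pairwise independent atoms: for an atom \<open>u \<le> b\<close> the element \<open>b + u\<close> lies strictly below \<open>b\<close>,
  and \<open>u\<close> is independent of everything below \<open>b + u\<close>. In a sum of pairwise independent atoms
  each summand lies below the sum, while an atom independent of all summands does not.
  Hence, when \<open>a\<close> is a tile, \<open>x \<mapsto> {atoms below x}\<close> maps the tail of \<open>a\<close> isomorphically
  onto the powerset of the atoms below \<open>a\<close>, and the expansion of \<open>a\<close> is unique. Conversely,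
  an isomorphism with a powerset sends atoms to singletons, and a unique expansion of \<open>a\<close>
  contains every atom \<open>u \<le> a\<close>, since \<open>u\<close> together with an expansion of \<open>a + u\<close> expands \<open>a\<close>.
\<close>

lemma finite_add_closed_imp_uminus_mem:
  fixes M :: "'a::ab_group_add set"
  assumes "finite M" and add_mem: "\<And>x y. x \<in> M \<Longrightarrow> y \<in> M \<Longrightarrow> x + y \<in> M" and "a \<in> M"
  shows "- a \<in> M"
proof -
  have onto: "(+) a ` M = M"
    using assms by (intro endo_inj_surj) (auto simp: inj_on_def)
  then obtain z where "z \<in> M" "a + z = a"
    using \<open>a \<in> M\<close> by (metis imageE)
  then have "0 \<in> M" by simp
  then obtain y where "y \<in> M" "a + y = 0"
    using onto by (metis imageE)
  then show ?thesis by (metis minus_unique)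
qed

lemma iso_powerset_image:
  assumes iso: "iso_powerset le S f I" and inj: "inj_on h I"
  shows "iso_powerset le S (\<lambda>x. h ` f x) (h ` I)"
proof -
  have bij: "bij_betw f S (Pow I)"
    and add: "\<And>x y. x \<in> S \<Longrightarrow> y \<in> S \<Longrightarrow> f (x + y) = (f x - f y) \<union> (f y - f x)"
    and ord: "\<And>x y. x \<in> S \<Longrightarrow> y \<in> S \<Longrightarrow> le x y \<longleftrightarrow> f x \<subseteq> f y"
    using iso unfolding iso_powerset_def by auto
  have sub: "\<And>x. x \<in> S \<Longrightarrow> f x \<subseteq> I"
    using bij by (auto dest: bij_betwE)
  have image_subset_cancel: "h ` P \<subseteq> h ` Q \<longleftrightarrow> P \<subseteq> Q" if "P \<subseteq> I" "Q \<subseteq> I" for P Q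
    using that inj_on_image_mem_iff[OF inj] by (auto simp: image_subset_iff) (metis subsetD)
  have "bij_betw (image h) (Pow I) (Pow (h ` I))"
    using inj by (intro bij_betw_Pow) (simp add: bij_betw_imageI)
  then have "bij_betw (\<lambda>x. h ` f x) S (Pow (h ` I))"
    using bij_betw_trans[OF bij] by (simp add: comp_def)
  moreover have "h ` f (x + y) = (h ` f x - h ` f y) \<union> (h ` f y - h ` f x)"
    if "x \<in> S" "y \<in> S" for x y
  proof -
    have "f x \<subseteq> I" "f y \<subseteq> I" "f x - f y \<subseteq> I" "f y - f x \<subseteq> I"
      using that sub by auto
    then show ?thesis
      unfolding add[OF that] image_Un by (simp add: inj_on_image_set_diff[OF inj])
  qed
  moreover have "le x y \<longleftrightarrow> h ` f x \<subseteq> h ` f y" if "x \<in> S" "y \<in> S" for x y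
    by (simp add: ord that image_subset_cancel sub)
  ultimately show ?thesis
    unfolding iso_powerset_def by simp
qed

locale finite_additive_poset =
  fixes le :: "'a::ab_group_add \<Rightarrow> 'a \<Rightarrow> bool"
  assumes additive_poset: "additive_poset le" and finite_UNIV: "finite (UNIV :: 'a set)"
begin

lemma le_refl: "le x x"
  using additive_poset unfolding additive_poset_def by blast

lemma le_antisym: "le x y \<Longrightarrow> le y x \<Longrightarrow> x = y"
  using additive_poset unfolding additive_poset_def by blast

lemma le_trans: "le x y \<Longrightarrow> le y z \<Longrightarrow> le x z"
  using additive_poset unfolding additive_poset_def by blast

lemma add_le: "le b a \<Longrightarrow> le c a \<Longrightarrow> le (b + c) a"
  using additive_poset unfolding additive_poset_def by blast

lemma le_add_add: "le a b \<Longrightarrow> le a c \<Longrightarrow> le a (a + b + c)"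
  using additive_poset unfolding additive_poset_def by blast

lemma finite_sets: "finite (S :: 'a set)"
  using finite_subset[OF subset_UNIV finite_UNIV] .

lemma uminus_le: "le (- a) a"
  using finite_add_closed_imp_uminus_mem[of "tail le a" a] finite_sets add_le le_refl
  unfolding tail_def by blast

lemma uminus_eq: "- a = (a::'a)"
  using le_antisym[OF uminus_le[of a]] uminus_le[of "- a"] by simp

lemma add_self: "a + a = (0::'a)"
  by (metis uminus_eq add.right_inverse)

lemma zero_le: "le 0 a"
  using add_le[OF le_refl le_refl, of a] add_self by simp

lemma independent_sym: "independent le x y \<Longrightarrow> independent le y x"
proof -
  assume "independent le x y"
  then have "le (x + (x + y)) (x + y)"
    unfolding independent_def by (rule add_le[OF _ le_refl])
  then show ?thesis
    unfolding independent_def by (simp add: add.assoc[symmetric] add_self add.commute)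
qed

lemma independent_self_iff: "independent le x x \<longleftrightarrow> x = 0"
  using zero_le le_antisym le_refl unfolding independent_def by (auto simp: add_self)

lemma independent_le_imp_zero: "le t b \<Longrightarrow> independent le t b \<Longrightarrow> t = 0"
proof -
  assume "le t b" "independent le t b"
  then have "le b (b + t)" "le (b + t) b"
    using independent_sym add_le[OF le_refl] unfolding independent_def by blast+
  then show "t = 0" using le_antisym by fastforce
qed

lemma independent_add:
  assumes "independent le x y" "independent le x z"
  shows "independent le x (y + z)"
proof -
  have "le x (x + (x + y) + (x + z))"
    using assms unfolding independent_def by (rule le_add_add)
  moreover have "x + (x + y) + (x + z) = (x + x) + (x + (y + z))"
    by (simp add: algebra_simps)
  ultimately show ?thesis
    unfolding independent_def by (simp add: add_self)
qed

lemma independent_sum: "\<forall>y\<in>T. independent le x y \<Longrightarrow> independent le x (\<Sum>T)"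
  using finite_sets[of T]
proof (induction T rule: finite_induct)
  case empty
  then show ?case by (simp add: independent_def le_refl)
next
  case insert
  then show ?case by (simp add: independent_add)
qed

lemma independent_le_left:
  assumes "le s b" "independent le u b"
  shows "independent le s u"
proof -
  have "le s (b + u)"
    using assms independent_sym le_trans unfolding independent_def by blast
  then have "le s (s + b + (b + u))"
    using assms(1) le_add_add by blast
  moreover have "s + b + (b + u) = (b + b) + (s + u)"
    by (simp add: algebra_simps)
  ultimately show ?thesis
    unfolding independent_def by (simp add: add_self)
qed

lemma atom_iff: "atom le x \<longleftrightarrow> x \<noteq> 0 \<and> (\<forall>y. le y x \<longrightarrow> y = 0 \<or> y = x)"
  unfolding atom_in_def using zero_le le_refl by auto

definition atoms_below :: "'a \<Rightarrow> 'a set" where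
  "atoms_below b = {u. atom le u \<and> le u b}"

lemma atom_in_tail_iff: "atom_in le (tail le a) x \<longleftrightarrow> x \<in> atoms_below a"
proof -
  have "le x a \<Longrightarrow> {y. le y a \<and> le y x} = {y. le y x}"
    using le_trans by blast
  then show ?thesis
    unfolding atom_in_def atoms_below_def tail_def by auto
qed

lemma exists_atom_below:
  assumes "b \<noteq> 0"
  obtains u where "atom le u" "le u b"
proof -
  let ?P = "\<lambda>v. v \<noteq> 0 \<and> le v b"
  obtain u where u: "?P u" and min: "\<And>v. ?P v \<Longrightarrow> card (tail le u) \<le> card (tail le v)"
    using ex_has_least_nat[of ?P b "\<lambda>v. card (tail le v)"] assms le_refl by blast
  have "v = 0 \<or> v = u" if "le v u" for v
  proof (rule ccontr)
    assume v: "\<not> (v = 0 \<or> v = u)"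
    then have "?P v"
      using that u le_trans by blast
    moreover have "tail le v \<subset> tail le u"
      using that v le_trans le_antisym le_refl unfolding tail_def by blast
    ultimately show False
      using min[of v] psubset_card_mono[OF finite_sets, of "tail le v" "tail le u"] by simp
  qed
  then show ?thesis
    using that u atom_iff by blast
qed

lemma le_sum_if_pairwise_independent:
  assumes "pairwise (independent le) S" "x \<in> S"
  shows "le x (\<Sum>S)"
proof -
  have "independent le x (\<Sum>(S - {x}))"
    using assms by (intro independent_sum) (auto simp: pairwise_def)
  then show ?thesis
    using sum.remove[OF finite_sets assms(2), of "\<lambda>y. y"] by (simp add: independent_def)
qed

lemma sum_le: "\<forall>x\<in>S. le x b \<Longrightarrow> le (\<Sum>S) b"
  using finite_sets[of S]
  by (induction S rule: finite_induct) (simp_all add: zero_le add_le)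

lemma sum_sym_diff:
  fixes P Q :: "'a set"
  shows "\<Sum>P + \<Sum>Q = \<Sum>((P - Q) \<union> (Q - P))"
proof -
  have "\<Sum>P = \<Sum>(P \<inter> Q) + \<Sum>(P - Q)"
    using sum.Int_Diff[OF finite_sets, of "\<lambda>u. u" P Q] .
  moreover have "\<Sum>Q = \<Sum>(P \<inter> Q) + \<Sum>(Q - P)"
    using sum.Int_Diff[OF finite_sets, of "\<lambda>u. u" Q P] by (simp add: Int_commute)
  moreover have "\<Sum>((P - Q) \<union> (Q - P)) = \<Sum>(P - Q) + \<Sum>(Q - P)"
    by (rule sum.union_disjoint) (auto simp: finite_sets)
  moreover have "\<And>c d e::'a. c + d + (c + e) = (c + c) + (d + e)"
    by (simp add: algebra_simps)
  ultimately show ?thesis by (simp add: add_self)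
qed

lemma atom_mem_if_le_sum:
  assumes "atom le u" "pairwise (independent le) (insert u S)" "le u (\<Sum>S)"
  shows "u \<in> S"
proof (rule ccontr)
  assume "u \<notin> S"
  then have "independent le u (\<Sum>S)"
    using assms(2) by (intro independent_sum) (auto simp: pairwise_insert)
  then show False
    using independent_le_imp_zero assms(1,3) atom_iff by blast
qed

definition atom_decomposition :: "'a set \<Rightarrow> 'a \<Rightarrow> bool" where
  "atom_decomposition S b \<longleftrightarrow> (\<forall>x\<in>S. atom le x) \<and> pairwise (independent le) S \<and> \<Sum>S = b"

lemma atom_decomposition_insert:
  assumes u: "atom le u" "le u b" and S: "atom_decomposition S (b + u)"
  shows "u \<notin> S" "atom_decomposition (insert u S) b"
proof -
  have pS: "pairwise (independent le) S" and sumS: "\<Sum>S = b + u"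
    using S unfolding atom_decomposition_def by auto
  have indep: "independent le u (b + u)"
    using u(2) unfolding independent_def by (simp add: add.left_commute add_self)
  then have "independent le s u \<and> independent le u s" if "s \<in> S" for s
    using that le_sum_if_pairwise_independent[OF pS] sumS independent_le_left independent_sym
    by metis
  moreover show "u \<notin> S"
    using le_sum_if_pairwise_independent[OF pS] sumS indep independent_le_imp_zero u atom_iff
    by metis
  moreover have "b + u + u = b"
    by (simp add: add.assoc add_self)
  ultimately show "atom_decomposition (insert u S) b"
    using S u(1) finite_sets[of S] by (auto simp: atom_decomposition_def pairwise_insert)
qed

lemma atom_decomposition_exists: "\<exists>S. atom_decomposition S b"
proof (induction "card (tail le b)" arbitrary: b rule: less_induct)
  case less
  show ?case
  proof (cases "b = 0")
    case True
    then show ?thesis by (auto simp: atom_decomposition_def)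
  next
    case False
    then obtain u where u: "atom le u" "le u b" by (rule exists_atom_below)
    have "le (b + u) b" "b + u \<noteq> b"
      using add_le[OF le_refl u(2)] u(1) atom_iff by auto
    then have "tail le (b + u) \<subset> tail le b"
      using le_trans le_antisym le_refl unfolding tail_def by blast
    then obtain S where "atom_decomposition S (b + u)"
      using less psubset_card_mono[OF finite_sets] by blast
    then show ?thesis
      using atom_decomposition_insert u by blast
  qed
qed

lemma atom_expansion_iff: "atom_expansion le b xs \<longleftrightarrow> distinct xs \<and> atom_decomposition (set xs) b"
proof
  assume e: "atom_expansion le b xs"
  have "distinct xs"
    unfolding distinct_conv_nth
  proof (intro allI impI)
    fix i j assume ij: "i < length xs" "j < length xs" "i \<noteq> j"
    have "xs ! i \<noteq> 0"
      using e ij(1) nth_mem atom_iff unfolding atom_expansion_def by blast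
    then show "xs ! i \<noteq> xs ! j"
      using e ij independent_self_iff unfolding atom_expansion_def by metis
  qed
  moreover have "pairwise (independent le) (set xs)"
    using e unfolding pairwise_def atom_expansion_def by (metis in_set_conv_nth)
  ultimately show "distinct xs \<and> atom_decomposition (set xs) b"
    using e sum_list_distinct_conv_sum_set[of xs "\<lambda>x. x"]
    by (simp add: atom_decomposition_def atom_expansion_def)
next
  assume "distinct xs \<and> atom_decomposition (set xs) b"
  then show "atom_expansion le b xs"
    using sum_list_distinct_conv_sum_set[of xs "\<lambda>x. x"]
    unfolding atom_expansion_def atom_decomposition_def pairwise_def
    by (auto simp: nth_eq_iff_index_eq)
qed

lemma atom_decomposition_imp_atom_expansion:
  assumes "atom_decomposition S b"
  obtains xs where "atom_expansion le b xs" "set xs = S"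
  using finite_distinct_list[OF finite_sets] assms atom_expansion_iff by metis

lemma tile_iff: "tile le a \<longleftrightarrow> a \<noteq> 0 \<and> pairwise (independent le) (atoms_below a)"
  unfolding tile_def pairwise_def atoms_below_def tail_def by auto

lemma atoms_below_sum:
  assumes "tile le a" "S \<subseteq> atoms_below a"
  shows "atoms_below (\<Sum>S) = S"
proof
  have pw: "pairwise (independent le) (atoms_below a)"
    using assms(1) tile_iff by blast
  show "S \<subseteq> atoms_below (\<Sum>S)"
    using le_sum_if_pairwise_independent[OF pairwise_subset[OF pw assms(2)]] assms(2)
    by (auto simp: atoms_below_def)
  show "atoms_below (\<Sum>S) \<subseteq> S"
  proof
    fix u assume u: "u \<in> atoms_below (\<Sum>S)"
    have "le (\<Sum>S) a"
      using assms(2) sum_le by (auto simp: atoms_below_def)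
    then have "insert u S \<subseteq> atoms_below a"
      using u assms(2) le_trans by (auto simp: atoms_below_def)
    then show "u \<in> S"
      using atom_mem_if_le_sum pairwise_subset[OF pw] u by (auto simp: atoms_below_def)
  qed
qed

lemma atom_decomposition_eq_atoms_below:
  assumes "tile le a" "le b a" "atom_decomposition S b"
  shows "S = atoms_below b"
proof -
  have "le x a" if "x \<in> S" for x
    using that assms(2,3) le_sum_if_pairwise_independent le_trans
    unfolding atom_decomposition_def by blast
  then have "S \<subseteq> atoms_below a"
    using assms(3) by (auto simp: atom_decomposition_def atoms_below_def)
  then show ?thesis
    using atoms_below_sum[OF assms(1)] assms(3) by (auto simp: atom_decomposition_def)
qed

lemma sum_atoms_below: "tile le a \<Longrightarrow> le b a \<Longrightarrow> \<Sum>(atoms_below b) = b"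
  using atom_decomposition_exists atom_decomposition_eq_atoms_below
  by (metis atom_decomposition_def)

lemma tile_iff_atoms_independent_sum:
  "tile le a \<longleftrightarrow> a \<noteq> 0 \<and> pairwise (independent le) (atoms_below a) \<and> \<Sum>(atoms_below a) = a"
  using tile_iff sum_atoms_below le_refl by blast

lemma tile_imp_iso_powerset:
  assumes "tile le a"
  shows "iso_powerset le (tail le a) atoms_below (atoms_below a)"
proof -
  have sum_eq: "\<Sum>(atoms_below x) = x" if "x \<in> tail le a" for x
    using that sum_atoms_below[OF assms] by (simp add: tail_def)
  have sub: "atoms_below x \<subseteq> atoms_below a" if "x \<in> tail le a" for x
    using that le_trans by (auto simp: tail_def atoms_below_def)
  have sum_mem: "\<Sum>S \<in> tail le a" if "S \<subseteq> atoms_below a" for S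
    using that sum_le by (auto simp: tail_def atoms_below_def)
  have "bij_betw atoms_below (tail le a) (Pow (atoms_below a))"
    by (rule bij_betw_byWitness[where f' = Sum])
      (use sum_eq sub sum_mem atoms_below_sum[OF assms] in auto)
  moreover have "atoms_below (x + y) = (atoms_below x - atoms_below y) \<union> (atoms_below y - atoms_below x)"
    if "x \<in> tail le a" "y \<in> tail le a" for x y
    using sum_sym_diff[of "atoms_below x" "atoms_below y"] atoms_below_sum[OF assms]
      sum_eq[OF that(1)] sum_eq[OF that(2)] sub[OF that(1)] sub[OF that(2)]
    by (metis Diff_subset le_supI order_trans)
  moreover have "le x y \<longleftrightarrow> atoms_below x \<subseteq> atoms_below y"
    if "x \<in> tail le a" "y \<in> tail le a" for x y
    using sum_le[of "atoms_below x" y] sum_eq[OF that(1)] le_trans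
    by (auto simp: atoms_below_def)
  ultimately show ?thesis
    unfolding iso_powerset_def by simp
qed

lemma iso_powerset_imp_tile:
  assumes "a \<noteq> 0" and iso: "iso_powerset le (tail le a) f I"
  shows "tile le a"
proof -
  have bij: "bij_betw f (tail le a) (Pow I)"
    and add: "\<And>x y. x \<in> tail le a \<Longrightarrow> y \<in> tail le a \<Longrightarrow> f (x + y) = (f x - f y) \<union> (f y - f x)"
    and ord: "\<And>x y. x \<in> tail le a \<Longrightarrow> y \<in> tail le a \<Longrightarrow> le x y \<longleftrightarrow> f x \<subseteq> f y"
    using iso unfolding iso_powerset_def by auto
  have inj: "inj_on f (tail le a)"
    using bij by (rule bij_betw_imp_inj_on)
  have zero: "0 \<in> tail le a" and f_zero: "f 0 = {}"
    using add[of 0 0] zero_le by (auto simp: tail_def)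
  have singleton: "\<exists>i. f x = {i}" if "x \<in> atoms_below a" for x
  proof -
    have x: "x \<in> tail le a" "atom le x"
      using that by (auto simp: atoms_below_def tail_def)
    then have "f x \<noteq> {}"
      using inj zero f_zero atom_iff by (metis inj_onD)
    then obtain i where i: "i \<in> f x" by blast
    moreover have "{i} \<in> Pow I"
      using i bij_betwE[OF bij] x(1) by auto
    then obtain w where w: "w \<in> tail le a" "f w = {i}"
      using bij_betw_imp_surj_on[OF bij] by (metis imageE)
    ultimately have "le w x"
      using ord x(1) by simp
    then have "w = x"
      using x(2) w f_zero atom_iff by force
    then show ?thesis
      using w by blast
  qed
  have "independent le x y"
    if atoms: "x \<in> atoms_below a" "y \<in> atoms_below a" and "x \<noteq> y" for x y
  proof -
    obtain i j where ij: "f x = {i}" "f y = {j}"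
      using singleton atoms by metis
    have xy: "x \<in> tail le a" "y \<in> tail le a" "x + y \<in> tail le a"
      using atoms add_le by (auto simp: atoms_below_def tail_def)
    then have "i \<noteq> j"
      using inj ij \<open>x \<noteq> y\<close> by (metis inj_onD)
    then have "f x \<subseteq> f (x + y)"
      using add[OF xy(1,2)] ij by auto
    then show ?thesis
      unfolding independent_def using ord xy by blast
  qed
  then show ?thesis
    using assms(1) tile_iff pairwise_def by blast
qed

lemma tile_iff_unique_atom_expansion:
  "tile le a \<longleftrightarrow> a \<noteq> 0 \<and>
     (\<exists>xs. atom_expansion le a xs \<and> (\<forall>ys. atom_expansion le a ys \<longrightarrow> mset ys = mset xs))"
proof (intro iffI conjI)
  assume tile: "tile le a"
  then show "a \<noteq> 0"
    using tile_iff by blast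
  have "atom_decomposition (atoms_below a) a"
    using tile tile_iff_atoms_independent_sum by (auto simp: atom_decomposition_def atoms_below_def)
  then obtain xs where xs: "atom_expansion le a xs" "set xs = atoms_below a"
    by (rule atom_decomposition_imp_atom_expansion)
  have "mset ys = mset xs" if "atom_expansion le a ys" for ys
    using that xs atom_expansion_iff atom_decomposition_eq_atoms_below[OF tile le_refl]
    by (metis set_eq_iff_mset_eq_distinct)
  then show "\<exists>xs. atom_expansion le a xs \<and> (\<forall>ys. atom_expansion le a ys \<longrightarrow> mset ys = mset xs)"
    using xs(1) by blast
next
  assume "a \<noteq> 0 \<and> (\<exists>xs. atom_expansion le a xs \<and> (\<forall>ys. atom_expansion le a ys \<longrightarrow> mset ys = mset xs))"
  then obtain xs where a: "a \<noteq> 0" and xs: "atom_expansion le a xs"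
    and unique: "\<And>ys. atom_expansion le a ys \<Longrightarrow> mset ys = mset xs"
    by blast
  have "u \<in> set xs" if "u \<in> atoms_below a" for u
  proof -
    have u: "atom le u" "le u a"
      using that by (auto simp: atoms_below_def)
    obtain S where "atom_decomposition S (a + u)"
      using atom_decomposition_exists by blast
    then obtain ys where "atom_expansion le a ys" "set ys = insert u S"
      using atom_decomposition_insert[OF u] atom_decomposition_imp_atom_expansion by metis
    then show ?thesis
      using unique by (metis insertI1 set_mset_mset)
  qed
  then have "pairwise (independent le) (atoms_below a)"
    using xs atom_expansion_iff pairwise_subset by (metis atom_decomposition_def subsetI)
  then show "tile le a"
    using a tile_iff by blast
qed

end

theorem theorem6p4:
  fixes le :: "'a::ab_group_add \<Rightarrow> 'a \<Rightarrow> bool" and a :: 'a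
  assumes "additive_poset le" and "finite (UNIV :: 'a set)" and "a \<noteq> 0"
  shows "(tile le a \<longleftrightarrow> (\<exists>(I::nat set) f. iso_powerset le (tail le a) f I))
       \<and> (tile le a \<longleftrightarrow>
            ((\<forall>x y. atom_in le (tail le a) x \<and> atom_in le (tail le a) y \<and> x \<noteq> y
                 \<longrightarrow> independent le x y)
             \<and> (\<Sum>x\<in>{x. atom_in le (tail le a) x}. x) = a))
       \<and> (tile le a \<longleftrightarrow>
            (\<exists>xs. atom_expansion le a xs \<and>
                 (\<forall>ys. atom_expansion le a ys \<longrightarrow> mset ys = mset xs)))"
proof -
  interpret finite_additive_poset le
    using assms(1,2) by unfold_locales
  have "tile le a \<longleftrightarrow> (\<exists>(I::nat set) f. iso_powerset le (tail le a) f I)"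
  proof
    assume "tile le a"
    moreover obtain h :: "'a \<Rightarrow> nat" where "inj_on h (atoms_below a)"
      using finite_imp_inj_to_nat_seg[OF finite_sets] by blast
    ultimately show "\<exists>(I::nat set) f. iso_powerset le (tail le a) f I"
      using iso_powerset_image tile_imp_iso_powerset by blast
  qed (use iso_powerset_imp_tile assms(3) in blast)
  moreover have "tile le a \<longleftrightarrow>
      (\<forall>x y. x \<in> atoms_below a \<and> y \<in> atoms_below a \<and> x \<noteq> y \<longrightarrow> independent le x y)
      \<and> \<Sum>(atoms_below a) = a"
    using tile_iff_atoms_independent_sum assms(3) unfolding pairwise_def by blast
  moreover have "tile le a \<longleftrightarrow>
      (\<exists>xs. atom_expansion le a xs \<and> (\<forall>ys. atom_expansion le a ys \<longrightarrow> mset ys = mset xs))"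
    using tile_iff_unique_atom_expansion assms(3) by blast
  ultimately show ?thesis
    unfolding atom_in_tail_iff Collect_mem_eq by blast
qed

end
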